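(* Consider a well-posed network $\Sigma$ and nonempty closed sets $\mathcal{A}_i\subset\mathbb{R}^{n_i}$, $i\in\mathbb{N}$, and let $\mathcal{A}:=\{x\in X: x_i\in\mathcal{A}_i\ \forall i\}$. Suppose $\Sigma$ is eISS with respect to $\mathcal{A}$. Then there exist $M\in\mathbb{N}$ and continuous functions $W_i:\mathbb{R}^{n_i}\to[0,\infty)$, $i\in\mathbb{N}$, together with $\underline\omega_i,\overline\omega_i\in\mathcal{K}_\infty$, $\gamma_{ij}\in\mathcal{K}_\infty\cup\{0\}$, $\gamma_{iu}\in\mathcal{K}$ ($i,j\in\mathbb{N}$) such that: (1) $\underline\omega_i(|\xi_i|_{\mathcal{A}_i})\le W_i(\xi_i)\le\overline\omega_i(|\xi_i|_{\mathcal{A}_i})$ for all $i$ and $\xi_i\in\mathbb{R}^{n_i}$; (2) $W_i(x_i(M,\xi,u))\le\max\{\sup_{j\in\mathbb{N}}\gamma_{ij}(W_j(\xi_j)),\gamma_{iu}(\|u\|_\infty)\}$ for all $i$, $\xi\in X$, $u\in\mathcal{U}$; (3) there exist $\underline\omega,\overline\omega\in\mathcal{K}_\infty$ with $\underline\omega\le\underline\omega_i\le\overline\omega_i\le\overline\omega$ for all $i$, $\alpha\in\mathcal{K}_\infty$ with $\alpha(s)<s$ for $s>0$ and $\gamma_{ij}\le\alpha$ for all $i,j$, and $\bar\gamma_u\in\mathcal{K}$ with $\gamma_{iu}\le\bar\gamma_u$ for all $i$.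
   Context: For each $i\in\mathbb{N}$ fix positive integers $n_i,p_i$, norms on $\mathbb{R}^{n_i},\mathbb{R}^{p_i}$, a finite set $I_i\subset\mathbb{N}\setminus\{i\}$ with every $\{j: i\in I_j\}$ finite, and continuous $f_i:\mathbb{R}^{n_i}\times\prod_{j\in I_i}\mathbb{R}^{n_j}\times\mathbb{R}^{p_i}\to\mathbb{R}^{n_i}$. $X$ (resp. $U$) the spaces of sequences $(x_i)$, $x_i\in\mathbb{R}^{n_i}$ (resp. $(u_i)$, $u_i\in\mathbb{R}^{p_i}$) with finite norm $|x|_\infty=\sup_i|x_i|$. $f(x,u)_i=f_i(x_i,(x_j)_{j\in I_i},u_i)$; network $\Sigma$: $x(k+1)=f(x(k),u(k))$; well-posed means $f(X\times U)\subset X$. $\mathcal{U}$: sequences $u:\mathbb{N}_0\to U$ with $\|u\|_\infty=\sup_k|u(k)|_\infty<\infty$; $x(k,\xi,u)$ the solution with $x(0)=\xi$, $x_i(k,\xi,u)$ its $i$-th component. $|z|_{\mathcal{A}_i}=\inf_{y\in\mathcal{A}_i}|z-y|$, $|x|_{\mathcal{A}}=\inf_{y\in\mathcal{A}}|x-y|_\infty$. $\Sigma$ is eISS w.r.t. $\mathcal{A}$ ($\mathcal{A}$ nonempty) if there exist $C\ge1$, $\rho\in[0,1)$, $\gamma\in\mathcal{K}$ with $|x(k,\xi,u)|_{\mathcal{A}}\le\max\{C\rho^k|\xi|_{\mathcal{A}},\gamma(\|u\|_\infty)\}$ for all $\xi\in X$, $u\in\mathcal{U}$, $k\in\mathbb{N}_0$.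 $\mathcal{K},\mathcal{K}_\infty$ standard comparison classes. *)

theory Defs
  imports "HOL-Analysis.Analysis"
begin

text \<open>Vectors of R^m are modelled as functions nat => real vanishing outside {0..<m}.
  States are sequences nat => (nat => real), inputs likewise.\<close>

definition Rn :: "nat \<Rightarrow> (nat \<Rightarrow> real) set" where
  "Rn m = {v. \<forall>k\<ge>m. v k = 0}"

definition is_norm_on :: "(nat \<Rightarrow> real) set \<Rightarrow> ((nat \<Rightarrow> real) \<Rightarrow> real) \<Rightarrow> bool" where
  "is_norm_on V N \<longleftrightarrow>
     (\<forall>v\<in>V. 0 \<le> N v) \<and> (\<forall>v\<in>V. N v = 0 \<longleftrightarrow> v = (\<lambda>k. 0)) \<and>
     (\<forall>v\<in>V. \<forall>c::real. N (\<lambda>k. c * v k) = \<bar>c\<bar> * N v) \<and>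
     (\<forall>v\<in>V. \<forall>w\<in>V. N (\<lambda>k. v k + w k) \<le> N v + N w)"

definition classK :: "(real \<Rightarrow> real) \<Rightarrow> bool" where
  "classK g \<longleftrightarrow> continuous_on {0..} g \<and> g 0 = 0 \<and> strict_mono_on {0..} g"

definition classKinf :: "(real \<Rightarrow> real) \<Rightarrow> bool" where
  "classKinf g \<longleftrightarrow> classK g \<and> filterlim g at_top at_top"

definition zero_fun_on :: "(real \<Rightarrow> real) \<Rightarrow> bool" where
  "zero_fun_on g \<longleftrightarrow> (\<forall>s\<ge>0. g s = 0)"

definition supnorm :: "(nat \<Rightarrow> (nat \<Rightarrow> real) \<Rightarrow> real) \<Rightarrow> (nat \<Rightarrow> nat \<Rightarrow> real) \<Rightarrow> real" where
  "supnorm N x = (SUP i. N i (x i))"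

definition seqspace :: "(nat \<Rightarrow> nat) \<Rightarrow> (nat \<Rightarrow> (nat \<Rightarrow> real) \<Rightarrow> real) \<Rightarrow> (nat \<Rightarrow> nat \<Rightarrow> real) set" where
  "seqspace d N = {x. (\<forall>i. x i \<in> Rn (d i)) \<and> bdd_above (range (\<lambda>i. N i (x i)))}"

text \<open>Standing assumptions on the network. f i x v is f_i evaluated at
  (x_i, (x_j)_{j in I_i}, v), where v plays the role of u_i; locality says it depends only on those
  components of x.\<close>
definition network ::
  "(nat \<Rightarrow> nat) \<Rightarrow> (nat \<Rightarrow> nat) \<Rightarrow> (nat \<Rightarrow> (nat \<Rightarrow> real) \<Rightarrow> real) \<Rightarrow> (nat \<Rightarrow> (nat \<Rightarrow> real) \<Rightarrow> real)
   \<Rightarrow> (nat \<Rightarrow> nat set) \<Rightarrow> (nat \<Rightarrow> (nat \<Rightarrow> nat \<Rightarrow> real) \<Rightarrow> (nat \<Rightarrow> real) \<Rightarrow> (nat \<Rightarrow> real)) \<Rightarrow> bool" where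
  "network n p Nx Nu I f \<longleftrightarrow>
     (\<forall>i. 0 < n i \<and> 0 < p i) \<and>
     (\<forall>i. is_norm_on (Rn (n i)) (Nx i) \<and> is_norm_on (Rn (p i)) (Nu i)) \<and>
     (\<forall>i. finite (I i) \<and> i \<notin> I i \<and> finite {j. i \<in> I j}) \<and>
     (\<forall>i x y v. x i = y i \<and> (\<forall>j\<in>I i. x j = y j) \<longrightarrow> f i x v = f i y v) \<and>
     (\<forall>i x v. (\<forall>j. x j \<in> Rn (n j)) \<and> v \<in> Rn (p i) \<longrightarrow> f i x v \<in> Rn (n i)) \<and>
     (\<forall>i. continuous_on {(x, v). (\<forall>j. x j \<in> Rn (n j)) \<and> v \<in> Rn (p i)} (\<lambda>(x, v). f i x v))"

definition well_posed where
  "well_posed n p Nx Nu f \<longleftrightarrow>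
     (\<forall>x\<in>seqspace n Nx. \<forall>u\<in>seqspace p Nu. (\<lambda>i. f i x (u i)) \<in> seqspace n Nx)"

text \<open>Admissible inputs: u k i is u_i(k).\<close>
definition inputs where
  "inputs p Nu = {u :: nat \<Rightarrow> nat \<Rightarrow> nat \<Rightarrow> real.
      (\<forall>k. u k \<in> seqspace p Nu) \<and> bdd_above (range (\<lambda>k. supnorm Nu (u k)))}"

definition inorm where
  "inorm Nu u = (SUP k. supnorm Nu (u k))"

primrec traj :: "(nat \<Rightarrow> (nat \<Rightarrow> nat \<Rightarrow> real) \<Rightarrow> (nat \<Rightarrow> real) \<Rightarrow> (nat \<Rightarrow> real))
   \<Rightarrow> (nat \<Rightarrow> nat \<Rightarrow> real) \<Rightarrow> (nat \<Rightarrow> nat \<Rightarrow> nat \<Rightarrow> real) \<Rightarrow> nat \<Rightarrow> nat \<Rightarrow> nat \<Rightarrow> real" where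
  "traj f \<xi> u 0 = \<xi>"
| "traj f \<xi> u (Suc k) = (\<lambda>i. f i (traj f \<xi> u k) (u k i))"

definition cdist :: "((nat \<Rightarrow> real) \<Rightarrow> real) \<Rightarrow> (nat \<Rightarrow> real) set \<Rightarrow> (nat \<Rightarrow> real) \<Rightarrow> real" where
  "cdist N A z = (INF y\<in>A. N (\<lambda>k. z k - y k))"

definition sdist where
  "sdist Nx AA x = (INF y\<in>AA. supnorm Nx (\<lambda>i k. x i k - y i k))"

definition prodset where
  "prodset n Nx A = {x \<in> seqspace n Nx. \<forall>i. x i \<in> A i}"

definition eISS where
  "eISS n p Nx Nu f AA \<longleftrightarrow> AA \<noteq> {} \<and>
     (\<exists>C \<rho> \<gamma>. C \<ge> 1 \<and> 0 \<le> \<rho> \<and> \<rho> < 1 \<and> classK \<gamma> \<and>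
        (\<forall>\<xi>\<in>seqspace n Nx. \<forall>u\<in>inputs p Nu. \<forall>k.
           sdist Nx AA (traj f \<xi> u k) \<le> max (C * \<rho> ^ k * sdist Nx AA \<xi>) (\<gamma> (inorm Nu u))))"

end

theory Submission
  imports Defs
begin

(* Take W i to be the distance to A i, all gains g i j s = s / 2 and g_iu the eISS gain.
   The distance to the product set is the supremum of the componentwise distances, so eISS gives
   |x_i(M)|_{A_i} <= |x(M)|_A <= max (C rho^M sup_j |xi_j|_{A_j}) (gamma |u|), and it remains
   to pick M with C rho^M <= 1/2. Continuity of W i holds because the distance is 1-Lipschitz
   and, in finite dimension, every norm is dominated by a weighted sum of coordinates. *)

lemma Rn_diff: "v \<in> Rn m \<Longrightarrow> w \<in> Rn m \<Longrightarrow> (\<lambda>k. v k - w k) \<in> Rn m"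
  by (simp add: Rn_def)

lemma Rn_scale: "v \<in> Rn m \<Longrightarrow> (\<lambda>k. c * v k) \<in> Rn m"
  by (simp add: Rn_def)

lemma Rn_mono: "j \<le> m \<Longrightarrow> Rn j \<subseteq> Rn m"
  by (auto simp: Rn_def)

definition unit_vec :: "nat \<Rightarrow> nat \<Rightarrow> real" where
  "unit_vec j = (\<lambda>k. if k = j then 1 else 0)"

locale Rn_norm =
  fixes m :: nat and N :: "(nat \<Rightarrow> real) \<Rightarrow> real"
  assumes is_norm: "is_norm_on (Rn m) N"
begin

lemma nonneg: "v \<in> Rn m \<Longrightarrow> 0 \<le> N v"
  using is_norm by (simp add: is_norm_on_def)

lemma zero: "N (\<lambda>k. 0) = 0"
  using is_norm by (simp add: is_norm_on_def Rn_def)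

lemma homogeneous: "v \<in> Rn m \<Longrightarrow> N (\<lambda>k. c * v k) = \<bar>c\<bar> * N v"
  using is_norm by (simp add: is_norm_on_def)

lemma triangle: "v \<in> Rn m \<Longrightarrow> w \<in> Rn m \<Longrightarrow> N (\<lambda>k. v k + w k) \<le> N v + N w"
  using is_norm by (simp add: is_norm_on_def)

lemma minus_commute:
  assumes "v \<in> Rn m" "w \<in> Rn m"
  shows "N (\<lambda>k. v k - w k) = N (\<lambda>k. w k - v k)"
  using homogeneous[OF Rn_diff[OF assms], of "-1"] by simp

lemma diff_triangle:
  assumes "v \<in> Rn m" "w \<in> Rn m" "u \<in> Rn m"
  shows "N (\<lambda>k. v k - w k) \<le> N (\<lambda>k. v k - u k) + N (\<lambda>k. u k - w k)"
  using triangle[OF Rn_diff[OF assms(1,3)] Rn_diff[OF assms(3,2)]] by simp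

lemma diff_le_add:
  assumes "v \<in> Rn m" "w \<in> Rn m"
  shows "N (\<lambda>k. v k - w k) \<le> N v + N w"
  using triangle[OF assms(1) Rn_scale[OF assms(2)], of "-1"] homogeneous[OF assms(2), of "-1"]
  by simp

lemma le_sum_coordinates:
  "v \<in> Rn j \<Longrightarrow> j \<le> m \<Longrightarrow> N v \<le> (\<Sum>k<j. \<bar>v k\<bar> * N (unit_vec k))"
proof (induction j arbitrary: v)
  case 0
  then have "v = (\<lambda>k. 0)" by (auto simp: Rn_def)
  then show ?case using zero by simp
next
  case (Suc j)
  define v' where "v' = v(j := 0)"
  have v'_Rn: "v' \<in> Rn j" using Suc.prems(1) by (auto simp: Rn_def v'_def)
  have ej: "unit_vec j \<in> Rn m" using Suc.prems(2) by (auto simp: Rn_def unit_vec_def)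
  have "v = (\<lambda>k. v' k + v j * unit_vec j k)" by (auto simp: v'_def unit_vec_def)
  then have "N v = N (\<lambda>k. v' k + v j * unit_vec j k)" by (rule arg_cong)
  also have "\<dots> \<le> N v' + N (\<lambda>k. v j * unit_vec j k)"
    using triangle[OF subsetD[OF Rn_mono v'_Rn] Rn_scale[OF ej]] Suc.prems(2) by simp
  also have "\<dots> = N v' + \<bar>v j\<bar> * N (unit_vec j)" using homogeneous[OF ej] by simp
  also have "N v' \<le> (\<Sum>k<j. \<bar>v' k\<bar> * N (unit_vec k))"
    using Suc.IH[OF v'_Rn] Suc.prems(2) by simp
  also have "(\<Sum>k<j. \<bar>v' k\<bar> * N (unit_vec k)) = (\<Sum>k<j. \<bar>v k\<bar> * N (unit_vec k))"
    by (auto simp: v'_def intro!: sum.cong)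
  finally show ?case by simp
qed

lemma tendsto_diff_zero:
  assumes "z \<in> Rn m"
  shows "((\<lambda>w. N (\<lambda>k. w k - z k)) \<longlongrightarrow> 0) (at z within Rn m)"
proof (rule Lim_null_comparison)
  let ?g = "\<lambda>w. \<Sum>k<m. \<bar>w k - z k\<bar> * N (unit_vec k)"
  show "\<forall>\<^sub>F w in at z within Rn m. norm (N (\<lambda>k. w k - z k)) \<le> ?g w"
    unfolding eventually_at_filter
  proof (intro always_eventually allI impI)
    fix w assume "w \<in> Rn m"
    then show "norm (N (\<lambda>k. w k - z k)) \<le> ?g w"
      using le_sum_coordinates[where v="\<lambda>k. w k - z k" and j=m] nonneg[OF Rn_diff] Rn_diff assms
      by simp
  qed
  have "isCont (\<lambda>w. w k) z" for k
    using continuous_on_product_coordinates[of k] continuous_on_eq_continuous_at[OF open_UNIV]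
    by blast
  then have "((\<lambda>w. w k) \<longlongrightarrow> z k) (at z within Rn m)" for k
    using continuous_at_imp_continuous_at_within continuous_within by blast
  then have "(?g \<longlongrightarrow> (\<Sum>k<m. \<bar>z k - z k\<bar> * N (unit_vec k))) (at z within Rn m)"
    by (intro tendsto_intros)
  then show "(?g \<longlongrightarrow> 0) (at z within Rn m)" by simp
qed

lemma cdist_nonneg: "A \<subseteq> Rn m \<Longrightarrow> A \<noteq> {} \<Longrightarrow> z \<in> Rn m \<Longrightarrow> 0 \<le> cdist N A z"
  unfolding cdist_def by (auto intro!: cINF_greatest nonneg Rn_diff)

lemma cdist_le: "A \<subseteq> Rn m \<Longrightarrow> z \<in> Rn m \<Longrightarrow> y \<in> A \<Longrightarrow> cdist N A z \<le> N (\<lambda>k. z k - y k)"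
  unfolding cdist_def by (rule cINF_lower) (auto intro!: bdd_belowI[of _ 0] nonneg Rn_diff)

lemma cdist_lipschitz:
  assumes A: "A \<subseteq> Rn m" "A \<noteq> {}" and z: "z \<in> Rn m" and w: "w \<in> Rn m"
  shows "cdist N A z \<le> cdist N A w + N (\<lambda>k. z k - w k)"
proof -
  have "cdist N A z - N (\<lambda>k. z k - w k) \<le> N (\<lambda>k. w k - y k)" if y: "y \<in> A" for y
    using cdist_le[OF A(1) z y] diff_triangle[OF z subsetD[OF A(1) y] w] by simp
  then have "cdist N A z - N (\<lambda>k. z k - w k) \<le> cdist N A w"
    unfolding cdist_def[of N A w] by (intro cINF_greatest A(2))
  then show ?thesis by simp
qed

lemma continuous_on_cdist:
  assumes A: "A \<subseteq> Rn m" "A \<noteq> {}"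
  shows "continuous_on (Rn m) (cdist N A)"
  unfolding continuous_on_def
proof
  fix z assume z: "z \<in> Rn m"
  have "\<forall>\<^sub>F w in at z within Rn m. norm (cdist N A w - cdist N A z) \<le> N (\<lambda>k. w k - z k)"
    unfolding eventually_at_filter
  proof (intro always_eventually allI impI)
    fix w assume w: "w \<in> Rn m"
    show "norm (cdist N A w - cdist N A z) \<le> N (\<lambda>k. w k - z k)"
      using cdist_lipschitz[OF A w z] cdist_lipschitz[OF A z w] minus_commute[OF w z] by simp
  qed
  from Lim_null_comparison[OF this tendsto_diff_zero[OF z]]
  show "(cdist N A \<longlongrightarrow> cdist N A z) (at z within Rn m)"
    by (simp add: LIM_zero_iff)
qed

end

locale seq_norms =
  fixes n :: "nat \<Rightarrow> nat" and Nx :: "nat \<Rightarrow> (nat \<Rightarrow> real) \<Rightarrow> real"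
  assumes component_norm: "Rn_norm (n i) (Nx i)"
begin

lemma seqspace_component: "x \<in> seqspace n Nx \<Longrightarrow> x i \<in> Rn (n i)"
  by (simp add: seqspace_def)

lemma bdd_above_diff:
  assumes x: "x \<in> seqspace n Nx" and y: "y \<in> seqspace n Nx"
  shows "bdd_above (range (\<lambda>j. Nx j (\<lambda>k. x j k - y j k)))"
proof -
  obtain Bx By where Bx: "\<And>j. Nx j (x j) \<le> Bx" and By: "\<And>j. Nx j (y j) \<le> By"
    using x y unfolding seqspace_def bdd_above_def by fast
  have "Nx j (\<lambda>k. x j k - y j k) \<le> Bx + By" for j
  proof -
    have "Nx j (\<lambda>k. x j k - y j k) \<le> Nx j (x j) + Nx j (y j)"
      by (rule Rn_norm.diff_le_add[OF component_norm seqspace_component[OF x] seqspace_component[OF y]])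
    also have "\<dots> \<le> Bx + By" by (intro add_mono Bx By)
    finally show ?thesis .
  qed
  then show ?thesis by (rule bdd_aboveI2)
qed

lemma component_le_supnorm_diff:
  "x \<in> seqspace n Nx \<Longrightarrow> y \<in> seqspace n Nx \<Longrightarrow>
    Nx j (\<lambda>k. x j k - y j k) \<le> supnorm Nx (\<lambda>i k. x i k - y i k)"
  unfolding supnorm_def by (rule cSUP_upper[OF UNIV_I bdd_above_diff])

lemma supnorm_diff_nonneg:
  assumes "x \<in> seqspace n Nx" "y \<in> seqspace n Nx"
  shows "0 \<le> supnorm Nx (\<lambda>i k. x i k - y i k)"
  by (rule order_trans[OF Rn_norm.nonneg[OF component_norm] component_le_supnorm_diff[OF assms]])
    (intro Rn_diff seqspace_component[OF assms(1)] seqspace_component[OF assms(2)])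

lemma cdist_le_sdist:
  assumes A_sub: "\<And>i. A i \<subseteq> Rn (n i)" and ne: "prodset n Nx A \<noteq> {}" and x: "x \<in> seqspace n Nx"
  shows "cdist (Nx i) (A i) (x i) \<le> sdist Nx (prodset n Nx A) x"
  unfolding sdist_def
proof (rule cINF_greatest[OF ne])
  fix y assume y: "y \<in> prodset n Nx A"
  then have y_seq: "y \<in> seqspace n Nx" and "y i \<in> A i" by (auto simp: prodset_def)
  then have "cdist (Nx i) (A i) (x i) \<le> Nx i (\<lambda>k. x i k - y i k)"
    using Rn_norm.cdist_le[OF component_norm A_sub seqspace_component[OF x]] by blast
  also have "\<dots> \<le> supnorm Nx (\<lambda>i k. x i k - y i k)"
    by (rule component_le_supnorm_diff[OF x y_seq])
  finally show "cdist (Nx i) (A i) (x i) \<le> supnorm Nx (\<lambda>i k. x i k - y i k)" .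
qed

lemma sdist_le_SUP_cdist:
  assumes A_sub: "\<And>i. A i \<subseteq> Rn (n i)" and A_ne: "\<And>i. A i \<noteq> {}"
    and ne: "prodset n Nx A \<noteq> {}" and x: "x \<in> seqspace n Nx"
  shows "sdist Nx (prodset n Nx A) x \<le> (SUP j. cdist (Nx j) (A j) (x j))"
proof (rule field_le_epsilon)
  fix e :: real assume e: "0 < e"
  define S where "S = (SUP j. cdist (Nx j) (A j) (x j))"
  have "bdd_above (range (\<lambda>j. cdist (Nx j) (A j) (x j)))"
    using cdist_le_sdist[OF A_sub ne x] by (rule bdd_aboveI2)
  then have le_S: "cdist (Nx j) (A j) (x j) \<le> S" for j
    unfolding S_def by (rule cSUP_upper[OF UNIV_I])
  have "\<exists>y\<in>A j. Nx j (\<lambda>k. x j k - y k) < cdist (Nx j) (A j) (x j) + e" for j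
    using cInf_lessD[of "(\<lambda>y. Nx j (\<lambda>k. x j k - y k)) ` A j"] A_ne[of j] e
    by (auto simp: cdist_def)
  then obtain y where y: "\<And>j. y j \<in> A j"
    and y_close: "\<And>j. Nx j (\<lambda>k. x j k - y j k) < cdist (Nx j) (A j) (x j) + e"
    by metis
  have y_Rn: "y j \<in> Rn (n j)" for j using y A_sub by blast
  obtain B where B: "\<And>j. Nx j (x j) \<le> B" using x unfolding seqspace_def bdd_above_def by fast
  have "Nx j (y j) \<le> B + (S + e)" for j
  proof -
    have "Nx j (y j) \<le> Nx j (x j) + Nx j (\<lambda>k. y j k - x j k)"
      using Rn_norm.triangle[OF component_norm seqspace_component[OF x] Rn_diff[OF y_Rn seqspace_component[OF x]]]
      by simp
    also have "Nx j (\<lambda>k. y j k - x j k) = Nx j (\<lambda>k. x j k - y j k)"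
      by (rule Rn_norm.minus_commute[OF component_norm y_Rn seqspace_component[OF x]])
    finally show ?thesis using B[of j] y_close[of j] le_S[of j] by linarith
  qed
  then have "bdd_above (range (\<lambda>j. Nx j (y j)))" by (rule bdd_aboveI2)
  then have y_prod: "y \<in> prodset n Nx A" by (simp add: prodset_def seqspace_def y y_Rn)
  have "sdist Nx (prodset n Nx A) x \<le> supnorm Nx (\<lambda>i k. x i k - y i k)"
    unfolding sdist_def
    by (rule cINF_lower[OF bdd_belowI[of _ 0] y_prod])
      (auto intro: supnorm_diff_nonneg[OF x] simp: prodset_def)
  also have "\<dots> \<le> S + e"
    unfolding supnorm_def
  proof (rule cSUP_least)
    fix j show "Nx j (\<lambda>k. x j k - y j k) \<le> S + e" using y_close[of j] le_S[of j] by linarith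
  qed simp
  finally show "sdist Nx (prodset n Nx A) x \<le> S + e" .
qed

lemma sdist_prodset_eq_SUP_cdist:
  assumes "\<And>i. A i \<subseteq> Rn (n i)" "\<And>i. A i \<noteq> {}" "prodset n Nx A \<noteq> {}" "x \<in> seqspace n Nx"
  shows "sdist Nx (prodset n Nx A) x = (SUP j. cdist (Nx j) (A j) (x j))"
  using sdist_le_SUP_cdist[OF assms] cdist_le_sdist[OF assms(1,3,4)]
  by (auto intro: antisym cSUP_least)

end

lemma traj_in_seqspace:
  assumes "well_posed n p Nx Nu f" "u \<in> inputs p Nu" "\<xi> \<in> seqspace n Nx"
  shows "traj f \<xi> u k \<in> seqspace n Nx"
  using assms by (induction k) (auto simp: well_posed_def inputs_def)

lemma classKinf_divide:
  assumes "0 < c"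
  shows "classKinf (\<lambda>s. s / c)"
  unfolding classKinf_def classK_def
proof (intro conjI)
  show "continuous_on {0..} (\<lambda>s. s / c)" using assms by (intro continuous_intros) auto
  show "strict_mono_on {0..} (\<lambda>s. s / c)"
    using assms by (auto simp: strict_mono_on_def divide_strict_right_mono)
  show "filterlim (\<lambda>s. s / c) at_top at_top"
  proof -
    have "LIM s at_top. s * inverse c :> at_top"
      by (rule filterlim_at_top_mult_tendsto_pos[OF tendsto_const _ filterlim_ident]) (simp add: assms)
    then show ?thesis by (simp add: divide_inverse)
  qed
qed simp

lemma cSUP_divide_const:
  fixes a :: "'a \<Rightarrow> real"
  assumes "bdd_above (range a)" "0 < c"
  shows "(SUP j. a j / c) = (SUP j. a j) / c"
proof -
  have "mono (\<lambda>s::real. s / c)" using assms(2) by (simp add: mono_def divide_right_mono)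
  then have "(SUP s\<in>range a. s / c) = Sup (range a) / c"
    using assms by (intro continuous_at_Sup_mono[symmetric]) (auto intro!: continuous_intros)
  then show ?thesis by (simp add: image_comp)
qed

lemma (in seq_norms) eISS_imp_componentwise_contraction:
  assumes wp: "well_posed n p Nx Nu f"
    and A_sub: "\<And>i. A i \<subseteq> Rn (n i)" and A_ne: "\<And>i. A i \<noteq> {}"
    and eiss: "eISS n p Nx Nu f (prodset n Nx A)"
  obtains M \<gamma> where "M \<ge> 1" and "classK \<gamma>"
    and "\<And>i \<xi> u. \<xi> \<in> seqspace n Nx \<Longrightarrow> u \<in> inputs p Nu \<Longrightarrow>
      cdist (Nx i) (A i) (traj f \<xi> u M i)
        \<le> max (SUP j. cdist (Nx j) (A j) (\<xi> j) / 2) (\<gamma> (inorm Nu u))"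
proof -
  let ?AA = "prodset n Nx A"
  obtain C \<rho> \<gamma> where ne: "?AA \<noteq> {}" and \<rho>: "0 \<le> \<rho>" "\<rho> < 1" and \<gamma>: "classK \<gamma>"
    and estimate: "\<And>\<xi> u k. \<xi> \<in> seqspace n Nx \<Longrightarrow> u \<in> inputs p Nu \<Longrightarrow>
      sdist Nx ?AA (traj f \<xi> u k) \<le> max (C * \<rho> ^ k * sdist Nx ?AA \<xi>) (\<gamma> (inorm Nu u))"
    using eiss unfolding eISS_def by blast
  have "(\<lambda>k. C * \<rho> ^ k) \<longlonglongrightarrow> 0"
    using \<rho> by (intro tendsto_mult_right_zero LIMSEQ_power_zero) simp
  then have "\<forall>\<^sub>F k in sequentially. C * \<rho> ^ k < 1 / 2"
    by (rule order_tendstoD) simp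
  then have "\<forall>\<^sub>F k in sequentially. C * \<rho> ^ k < 1 / 2 \<and> 1 \<le> k"
    using eventually_ge_at_top by (rule eventually_conj)
  then obtain M where M: "C * \<rho> ^ M < 1 / 2" "1 \<le> M"
    by (auto simp: eventually_sequentially)
  have "cdist (Nx i) (A i) (traj f \<xi> u M i)
      \<le> max (SUP j. cdist (Nx j) (A j) (\<xi> j) / 2) (\<gamma> (inorm Nu u))"
    if \<xi>: "\<xi> \<in> seqspace n Nx" and u: "u \<in> inputs p Nu" for i \<xi> u
  proof -
    have "0 \<le> cdist (Nx 0) (A 0) (\<xi> 0)"
      by (rule Rn_norm.cdist_nonneg[OF component_norm A_sub A_ne seqspace_component[OF \<xi>]])
    then have dist_nonneg: "0 \<le> sdist Nx ?AA \<xi>"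
      using cdist_le_sdist[OF A_sub ne \<xi>, of 0] by linarith
    have bdd: "bdd_above (range (\<lambda>j. cdist (Nx j) (A j) (\<xi> j)))"
      using cdist_le_sdist[OF A_sub ne \<xi>] by (rule bdd_aboveI2)
    have "C * \<rho> ^ M * sdist Nx ?AA \<xi> \<le> sdist Nx ?AA \<xi> / 2"
      using mult_right_mono[OF less_imp_le[OF M(1)] dist_nonneg] by simp
    also have "\<dots> = (SUP j. cdist (Nx j) (A j) (\<xi> j) / 2)"
      by (simp add: sdist_prodset_eq_SUP_cdist[OF A_sub A_ne ne \<xi>] cSUP_divide_const[OF bdd])
    finally have contraction: "C * \<rho> ^ M * sdist Nx ?AA \<xi> \<le> (SUP j. cdist (Nx j) (A j) (\<xi> j) / 2)" .
    have "cdist (Nx i) (A i) (traj f \<xi> u M i) \<le> sdist Nx ?AA (traj f \<xi> u M)"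
      by (rule cdist_le_sdist[OF A_sub ne traj_in_seqspace[OF wp u \<xi>]])
    also have "\<dots> \<le> max (C * \<rho> ^ M * sdist Nx ?AA \<xi>) (\<gamma> (inorm Nu u))"
      by (rule estimate[OF \<xi> u])
    also have "\<dots> \<le> max (SUP j. cdist (Nx j) (A j) (\<xi> j) / 2) (\<gamma> (inorm Nu u))"
      using contraction by (rule max.mono) simp
    finally show ?thesis .
  qed
  with M(2) \<gamma> show ?thesis by (rule that)
qed

theorem theorem3:
  fixes n p :: "nat \<Rightarrow> nat"
    and Nx Nu :: "nat \<Rightarrow> (nat \<Rightarrow> real) \<Rightarrow> real"
    and I :: "nat \<Rightarrow> nat set"
    and f :: "nat \<Rightarrow> (nat \<Rightarrow> nat \<Rightarrow> real) \<Rightarrow> (nat \<Rightarrow> real) \<Rightarrow> (nat \<Rightarrow> real)"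
    and A :: "nat \<Rightarrow> (nat \<Rightarrow> real) set"
  assumes net: "network n p Nx Nu I f"
    and wp: "well_posed n p Nx Nu f"
    and A_sub: "\<And>i. A i \<subseteq> Rn (n i)"
    and A_ne: "\<And>i. A i \<noteq> {}"
    and A_closed: "\<And>i. closed (A i)"
    and eiss: "eISS n p Nx Nu f (prodset n Nx A)"
  shows "\<exists>M::nat. \<exists>W :: nat \<Rightarrow> (nat \<Rightarrow> real) \<Rightarrow> real.
    \<exists>wl wu :: nat \<Rightarrow> real \<Rightarrow> real. \<exists>g :: nat \<Rightarrow> nat \<Rightarrow> real \<Rightarrow> real. \<exists>gu :: nat \<Rightarrow> real \<Rightarrow> real.
      M \<ge> 1 \<and>
      (\<forall>i. continuous_on (Rn (n i)) (W i) \<and> (\<forall>z\<in>Rn (n i). 0 \<le> W i z)) \<and>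
      (\<forall>i. classKinf (wl i) \<and> classKinf (wu i) \<and> classK (gu i)) \<and>
      (\<forall>i j. classKinf (g i j) \<or> zero_fun_on (g i j)) \<and>
      (\<forall>i. \<forall>z\<in>Rn (n i). wl i (cdist (Nx i) (A i) z) \<le> W i z
                          \<and> W i z \<le> wu i (cdist (Nx i) (A i) z)) \<and>
      (\<forall>i. \<forall>\<xi>\<in>seqspace n Nx. \<forall>u\<in>inputs p Nu.
          W i (traj f \<xi> u M i) \<le> max (SUP j. g i j (W j (\<xi> j))) (gu i (inorm Nu u))) \<and>
      (\<exists>wl0 wu0 \<alpha> gubar. classKinf wl0 \<and> classKinf wu0 \<and> classKinf \<alpha> \<and> classK gubar \<and>
         (\<forall>i. \<forall>s\<ge>0. wl0 s \<le> wl i s \<and> wl i s \<le> wu i s \<and> wu i s \<le> wu0 s) \<and>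
         (\<forall>s>0. \<alpha> s < s) \<and>
         (\<forall>i j. \<forall>s\<ge>0. g i j s \<le> \<alpha> s) \<and>
         (\<forall>i. \<forall>s\<ge>0. gu i s \<le> gubar s))"
proof -
  interpret seq_norms n Nx
    using net by (simp add: seq_norms_def Rn_norm_def network_def)
  obtain M \<gamma> where M: "M \<ge> 1" and \<gamma>: "classK \<gamma>"
    and contraction: "\<And>i \<xi> u. \<xi> \<in> seqspace n Nx \<Longrightarrow> u \<in> inputs p Nu \<Longrightarrow>
      cdist (Nx i) (A i) (traj f \<xi> u M i)
        \<le> max (SUP j. cdist (Nx j) (A j) (\<xi> j) / 2) (\<gamma> (inorm Nu u))"
    using eISS_imp_componentwise_contraction[OF wp A_sub A_ne eiss] by blast
  have W_cont: "continuous_on (Rn (n i)) (cdist (Nx i) (A i))" for i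
    by (rule Rn_norm.continuous_on_cdist[OF component_norm A_sub A_ne])
  have W_nonneg: "0 \<le> cdist (Nx i) (A i) z" if "z \<in> Rn (n i)" for i z
    by (rule Rn_norm.cdist_nonneg[OF component_norm A_sub A_ne that])
  have id: "classKinf (\<lambda>s. s)" using classKinf_divide[of 1] by simp
  have half: "classKinf (\<lambda>s. s / 2)" by (rule classKinf_divide) simp
  show ?thesis
    apply (rule exI[of _ M], rule exI[of _ "\<lambda>i. cdist (Nx i) (A i)"], rule exI[of _ "\<lambda>i s. s"],
        rule exI[of _ "\<lambda>i s. s"], rule exI[of _ "\<lambda>i j s. s / 2"], rule exI[of _ "\<lambda>i. \<gamma>"])
    apply (intro conjI; (rule exI[of _ "\<lambda>s. s"], rule exI[of _ "\<lambda>s. s"], rule exI[of _ "\<lambda>s. s / 2"],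
        rule exI[of _ \<gamma>])?)
    using M \<gamma> id half W_cont W_nonneg contraction by auto
qed

end
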